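(* Let $1\le D\le K-1$, let $\mathbf{L}$ be the $(K,D)$ AIR matrix, and let $x_0,\dots,x_{K-1}\in\mathbb{F}_q$. Define the broadcast symbols $c_k=\sum_{j=0}^{K-1}\mathbf{L}(j,k)\,x_j$ for $k\in[0:K-D-1]$. Then for every $k\in[0:K-D-1]$, $$c_k = x_k+\sum_{i=0}^{\lfloor l/2\rfloor} I_{\{k\in C_i\}}\; x_{(K-\lambda_{2i})+\big((k-(K-D-\lambda_{2i-1}))\bmod \lambda_{2i}\big)} \;+\;\sum_{i=1}^{\lceil l/2\rceil} I_{\{k\in C_i\cup C_{i+1}\cup\cdots\cup C_{\lceil l/2\rceil}\}}\sum_{j=1}^{\beta_{2i-1}} x_{\,k+\sum_{s=1}^{i-1}\beta_{2s-1}\lambda_{2s-1}+j\lambda_{2i-1}},$$ where $I_S$ equals $1$ if the statement $S$ is true and $0$ otherwise. (In particular the $i=0$ term of the first sum is $I_{\{k\in C_0\}}x_{(K-D)+(k\bmod \lambda_0)}$.)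
   Context: Notation: $[a:b]=\{a,a+1,\dots,b\}$ (empty if $b<a$). Let $K,D$ be integers with $1\le D\le K-1$. Define $\lambda_{-1}=K-D$, $\lambda_0=D$ and recursively, by Euclidean division, $\lambda_{i-1}=\beta_i\lambda_i+\lambda_{i+1}$ with $0\le\lambda_{i+1}<\lambda_i$, for $i=0,1,2,\dots$, stopping at the index $l\ge 0$ with $\lambda_{l+1}=0$ (so $\lambda_{l-1}=\beta_l\lambda_l$); $\beta_0\ge 0$ may be $0$, while $\beta_i\ge1$ for $i\ge1$. Set $\lambda_j=0$ for all $j>l$. For positive integers $m,n$ with $n\mid m$, let $\mathbf{I}_{m\times n}$ be the $m\times n$ matrix formed by stacking $m/n$ copies of the $n\times n$ identity matrix vertically, and $\mathbf{I}_{n\times m}$ its transpose ($m/n$ identity copies side by side). The $(K,D)$ AIR matrix $\mathbf{L}$ is the $K\times(K-D)$ $0/1$ matrix with rows indexed by $[0:K-1]$ and columns by $[0:K-D-1]$ whose entries are $0$ except in the following non-overlapping blocks: (a) the $(K-D)\times(K-D)$ identity matrix in rows $[0:K-D-1]$, columns $[0:K-D-1]$; (b) for each $i$ with $0\le 2i\le l$, the "even submatrix" $\mathbf{I}_{\lambda_{2i}\times\beta_{2i}\lambda_{2i}}$ occupying rows $[K-\lambda_{2i}:K-1]$ and columns $[K-D-\lambda_{2i-1}:K-D-\lambda_{2i+1}-1]$ (absent when $i=0$ and $\beta_0=0$); (c) for each $i$ with $1\le 2i+1\le l$, the "odd submatrix" $\mathbf{I}_{\beta_{2i+1}\lambda_{2i+1}\times\lambda_{2i+1}}$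 occupying rows $[K-\lambda_{2i}:K-\lambda_{2i+2}-1]$ and columns $[K-D-\lambda_{2i+1}:K-D-1]$. Column intervals: $C_i=[K-D-\lambda_{2i-1}:K-D-\lambda_{2i+1}-1]$ for $0\le i\le\lceil l/2\rceil$ (so $C_0=[0:\beta_0\lambda_0-1]$, empty if $\beta_0=0$); these partition $[0:K-D-1]$. *)

theory Defs
  imports Main
begin

(* Shifted Euclidean sequence: air_lamS K D n = lambda_{n-1}.
   lambda_{-1} = K-D, lambda_0 = D, lambda_{i+1} = lambda_{i-1} mod lambda_i while lambda_i > 0,
   and lambda_j = 0 once a zero has appeared. *)
fun air_lamS :: "nat \<Rightarrow> nat \<Rightarrow> nat \<Rightarrow> nat" where
  "air_lamS K D 0 = K - D"
| "air_lamS K D (Suc 0) = D"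
| "air_lamS K D (Suc (Suc n)) =
     (if air_lamS K D (Suc n) = 0 then 0 else air_lamS K D n mod air_lamS K D (Suc n))"

definition air_lam :: "nat \<Rightarrow> nat \<Rightarrow> int \<Rightarrow> nat" where
  "air_lam K D j = air_lamS K D (nat (j + 1))"

definition air_beta :: "nat \<Rightarrow> nat \<Rightarrow> nat \<Rightarrow> nat" where
  "air_beta K D i = air_lam K D (int i - 1) div air_lam K D (int i)"

definition air_l :: "nat \<Rightarrow> nat \<Rightarrow> nat" where
  "air_l K D = (LEAST i::nat. air_lam K D (int i + 1) = 0)"

definition air_C :: "nat \<Rightarrow> nat \<Rightarrow> nat \<Rightarrow> nat set" where
  "air_C K D i = {K - D - air_lam K D (2 * int i - 1) ..< K - D - air_lam K D (2 * int i + 1)}"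

(* The (K,D) AIR matrix, L j k (row j in [0:K-1], column k in [0:K-D-1]) is 1 iff this holds.
   (a) identity block; (b) even submatrices I_{lambda_{2i} x beta_{2i} lambda_{2i}}
   (entry (r,c) in local coordinates is 1 iff c mod lambda_{2i} = r);
   (c) odd submatrices I_{beta_{2i+1} lambda_{2i+1} x lambda_{2i+1}}
   (entry (r,c) is 1 iff r mod lambda_{2i+1} = c). *)
definition air_L :: "nat \<Rightarrow> nat \<Rightarrow> nat \<Rightarrow> nat \<Rightarrow> bool" where
  "air_L K D j k \<longleftrightarrow>
     (j < K - D \<and> k < K - D \<and> j = k)
   \<or> (\<exists>i::nat. 2 * i \<le> air_l K D
        \<and> K - air_lam K D (2 * int i) \<le> j \<and> j < K
        \<and> K - D - air_lam K D (2 * int i - 1) \<le> k \<and> k < K - D - air_lam K D (2 * int i + 1)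
        \<and> (k - (K - D - air_lam K D (2 * int i - 1))) mod air_lam K D (2 * int i)
             = j - (K - air_lam K D (2 * int i)))
   \<or> (\<exists>i::nat. 1 \<le> 2 * i + 1 \<and> 2 * i + 1 \<le> air_l K D
        \<and> K - air_lam K D (2 * int i) \<le> j \<and> j < K - air_lam K D (2 * int i + 2)
        \<and> K - D - air_lam K D (2 * int i + 1) \<le> k \<and> k < K - D
        \<and> (j - (K - air_lam K D (2 * int i))) mod air_lam K D (2 * int i + 1)
             = k - (K - D - air_lam K D (2 * int i + 1)))"

definition air_c :: "nat \<Rightarrow> nat \<Rightarrow> (nat \<Rightarrow> 'a::field) \<Rightarrow> nat \<Rightarrow> 'a" where
  "air_c K D x k = (\<Sum>j<K. (if air_L K D j k then 1 else 0) * x j)"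

end

theory Submission
  imports Defs
begin

text \<open>Column \<open>k\<close> of the AIR matrix meets the identity block in row \<open>k\<close>, at most one even
submatrix and some odd submatrices, and no two of these share a row, because the row and column
ranges of the blocks are cut out by the decreasing remainders \<open>\<lambda>_0 > \<lambda>_1 > \<dots>\<close>. The even
submatrix whose column range \<open>C_i\<close> contains \<open>k\<close> contributes the single row obtained by reducing
the local column index mod \<open>\<lambda>_{2i}\<close>. The odd submatrix \<open>2i-1\<close> meets column \<open>k\<close> exactly when
\<open>k \<ge> K - D - \<lambda>_{2i-1}\<close>, i.e. \<open>k \<in> C_i \<union> \<dots> \<union> C_{\<lceil>l/2\<rceil>}\<close>, and then in the
\<open>\<beta>_{2i-1}\<close> rows of one residue class mod \<open>\<lambda>_{2i-1}\<close>. Its first row \<open>K - \<lambda>_{2i-2}\<close> is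
located by telescoping \<open>\<lambda>_{j-1} = \<beta>_j \<lambda>_j + \<lambda>_{j+1}\<close> over odd \<open>j\<close>:
\<open>\<Sum>_{s<i} \<beta>_{2s-1} \<lambda>_{2s-1} = \<lambda>_0 - \<lambda>_{2i-2}\<close>.\<close>

lemma sum_indicator_unique:
  assumes "finite I" "\<And>i i'. i \<in> I \<Longrightarrow> i' \<in> I \<Longrightarrow> P i \<Longrightarrow> P i' \<Longrightarrow> i = i'"
  shows "(\<Sum>i\<in>I. if P i then 1 else 0) = (if \<exists>i\<in>I. P i then (1::'a::comm_semiring_1) else 0)"
proof (cases "\<exists>i\<in>I. P i")
  case True
  then obtain i0 where i0: "i0 \<in> I" "P i0" by blast
  have "(\<Sum>i\<in>I. if P i then (1::'a) else 0) = (\<Sum>i\<in>I. if i = i0 then 1 else 0)"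
    using assms(2) i0 by (intro sum.cong) auto
  also have "\<dots> = 1" using assms(1) i0 by simp
  finally show ?thesis using True by simp
qed simp

lemma sum_indicator_mult:
  fixes f :: "'a \<Rightarrow> 'b::semiring_1"
  assumes "finite A"
  shows "(\<Sum>j\<in>A. (if P j then 1 else 0) * f j) = sum f {j\<in>A. P j}"
proof -
  have "(\<Sum>j\<in>A. (if P j then 1 else 0) * f j) = (\<Sum>j\<in>A. if P j then f j else 0)"
    by (intro sum.cong) auto
  also have "\<dots> = sum f {j\<in>A. P j}" using assms by (rule sum.inter_filter[symmetric])
  finally show ?thesis .
qed

lemma UN_adjacent_atLeastLessThan:
  fixes f :: "nat \<Rightarrow> nat"
  assumes mono: "\<And>t. f t \<le> f (Suc t)" and "i \<le> m"
  shows "(\<Union>t\<in>{i..m}. {f t..<f (Suc t)}) = {f i..<f (Suc m)}"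
  using \<open>i \<le> m\<close>
proof (induction m rule: dec_induct)
  case (step m)
  have "{i..Suc m} = insert (Suc m) {i..m}" using step.hyps by auto
  then have "(\<Union>t\<in>{i..Suc m}. {f t..<f (Suc t)}) = {f i..<f (Suc m)} \<union> {f (Suc m)..<f (Suc (Suc m))}"
    using step.IH by auto
  also have "\<dots> = {f i..<f (Suc (Suc m))}"
  proof (rule ivl_disj_un_two(3))
    show "f i \<le> f (Suc m)" using lift_Suc_mono_le[of f i "Suc m"] mono step.hyps by simp
  qed (rule mono)
  finally show ?case .
qed simp

subsection \<open>The remainder sequence\<close>

text \<open>\<open>air_lamS K D n\<close> is \<open>\<lambda>_{n-1}\<close>; all reasoning below uses this shifted, natural-number index.\<close>

lemma air_lam_diff_one: "air_lam K D (int n - 1) = air_lamS K D n"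
  unfolding air_lam_def by (simp del: air_lamS.simps)

lemma air_lam_of_nat: "air_lam K D (int n) = air_lamS K D (Suc n)"
proof -
  have "nat (int n + 1) = Suc n" by simp
  then show ?thesis unfolding air_lam_def by (simp only:)
qed

lemma air_lam_double_diff_one: "air_lam K D (2 * int i - 1) = air_lamS K D (2*i)"
  using air_lam_diff_one[of K D "2*i"] by (simp del: air_lamS.simps)

lemma air_lam_double: "air_lam K D (2 * int i) = air_lamS K D (2*i+1)"
  using air_lam_of_nat[of K D "2*i"] by (simp del: air_lamS.simps)

lemma air_lam_double_add_one: "air_lam K D (2 * int i + 1) = air_lamS K D (2*i+2)"
  using air_lam_of_nat[of K D "2*i+1"] by (simp del: air_lamS.simps add: ac_simps)

lemma air_lam_double_add_two: "air_lam K D (2 * int i + 2) = air_lamS K D (2*i+3)"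
  using air_lam_of_nat[of K D "2*i+2"] by (simp del: air_lamS.simps add: ac_simps numeral_eq_Suc)

lemma air_beta_eq: "air_beta K D n = air_lamS K D n div air_lamS K D (Suc n)"
  unfolding air_beta_def using air_lam_diff_one air_lam_of_nat by (simp del: air_lamS.simps)

lemma air_lamS_Suc_Suc_le: "air_lamS K D (Suc (Suc n)) \<le> air_lamS K D (Suc n)"
  by (cases "air_lamS K D (Suc n) = 0") (auto intro: less_imp_le)

lemma air_lamS_antimono:
  assumes "1 \<le> n" "n \<le> m"
  shows "air_lamS K D m \<le> air_lamS K D n"
  using assms(2)
proof (induction m rule: dec_induct)
  case (step m)
  then obtain p where "m = Suc p" using assms(1) by (cases m) auto
  with step assms(1) show ?case using air_lamS_Suc_Suc_le[of K D p] by (cases p) auto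
qed simp

lemma air_lamS_even_antimono: "i \<le> j \<Longrightarrow> air_lamS K D (2*j) \<le> air_lamS K D (2*i)"
proof (induction j rule: dec_induct)
  case (step j)
  have "air_lamS K D (2 * Suc j) \<le> air_lamS K D (2*j)" by simp
  with step show ?case by simp
qed simp

lemma air_lamS_Suc_le: "air_lamS K D (Suc n) \<le> D - n"
proof (induction n)
  case (Suc n)
  show ?case
  proof (cases "air_lamS K D (Suc n) = 0")
    case False
    then have "air_lamS K D (Suc (Suc n)) < air_lamS K D (Suc n)" by simp
    with Suc show ?thesis by linarith
  qed simp
qed simp

lemma air_lamS_euclid:
  "air_lamS K D (Suc n) > 0 \<Longrightarrow>
   air_lamS K D n = air_lamS K D n div air_lamS K D (Suc n) * air_lamS K D (Suc n) + air_lamS K D (Suc (Suc n))"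
  by simp

lemma air_l_LEAST: "air_l K D = (LEAST i. air_lamS K D (i+2) = 0)"
proof -
  have "\<And>i. air_lam K D (int i + 1) = air_lamS K D (i+2)"
    using air_lam_of_nat[of K D "Suc _"] by (simp del: air_lamS.simps add: ac_simps)
  then show ?thesis unfolding air_l_def by (simp only:)
qed

lemma air_lamS_air_l:
  assumes "1 \<le> D"
  shows "air_lamS K D (air_l K D + 2) = 0" and "i < air_l K D \<Longrightarrow> air_lamS K D (i+2) \<noteq> 0"
proof -
  have "air_lamS K D ((D - 1) + 2) = 0"
    using air_lamS_Suc_le[of K D D] assms by (simp add: add.commute)
  then show "air_lamS K D (air_l K D + 2) = 0"
    unfolding air_l_LEAST by (rule LeastI[where P = "\<lambda>i. air_lamS K D (i+2) = 0"])
  show "i < air_l K D \<Longrightarrow> air_lamS K D (i+2) \<noteq> 0"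
    unfolding air_l_LEAST by (rule not_less_Least)
qed

lemma air_lamS_pos:
  assumes "1 \<le> D" "D < K" "n \<le> air_l K D + 1"
  shows "air_lamS K D n > 0"
proof (cases "n < 2")
  case True then show ?thesis using assms by (cases n) auto
next
  case False
  then obtain p where "n = p + 2" by (metis add.commute le_Suc_ex not_less)
  with air_lamS_air_l(2)[OF assms(1), of p] assms(3) show ?thesis by simp
qed

lemma air_lamS_eq_0:
  assumes "1 \<le> D" "air_l K D + 2 \<le> n"
  shows "air_lamS K D n = 0"
  using assms(2)
proof (induction n rule: dec_induct)
  case base then show ?case using air_lamS_air_l(1)[OF assms(1)] .
next
  case (step n)
  then obtain p where "n = Suc p" using assms by (cases n) auto
  with step show ?case by simp
qed

declare air_lamS.simps(3)[simp del]

subsection \<open>The blocks of the AIR matrix\<close>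

definition air_even_block :: "nat \<Rightarrow> nat \<Rightarrow> nat \<Rightarrow> nat \<Rightarrow> nat \<Rightarrow> bool" where
  "air_even_block K D k i j \<longleftrightarrow> K - air_lamS K D (2*i+1) \<le> j \<and> j < K
     \<and> K - D - air_lamS K D (2*i) \<le> k \<and> k < K - D - air_lamS K D (2*i+2)
     \<and> (k - (K - D - air_lamS K D (2*i))) mod air_lamS K D (2*i+1) = j - (K - air_lamS K D (2*i+1))"

definition air_odd_block :: "nat \<Rightarrow> nat \<Rightarrow> nat \<Rightarrow> nat \<Rightarrow> nat \<Rightarrow> bool" where
  "air_odd_block K D k i j \<longleftrightarrow> K - air_lamS K D (2*i+1) \<le> j \<and> j < K - air_lamS K D (2*i+3)
     \<and> K - D - air_lamS K D (2*i+2) \<le> k \<and> k < K - D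
     \<and> (j - (K - air_lamS K D (2*i+1))) mod air_lamS K D (2*i+2) = k - (K - D - air_lamS K D (2*i+2))"

lemma air_L_iff_blocks:
  "air_L K D j k \<longleftrightarrow> (j < K - D \<and> k < K - D \<and> j = k)
   \<or> (\<exists>i\<in>{0..air_l K D div 2}. air_even_block K D k i j)
   \<or> (\<exists>i\<in>{..<(air_l K D + 1) div 2}. air_odd_block K D k i j)"
proof -
  have "2 * i \<le> air_l K D \<longleftrightarrow> i \<in> {0..air_l K D div 2}" for i :: nat
    by auto
  then have even: "(\<exists>i::nat. 2 * i \<le> air_l K D \<and> P i) \<longleftrightarrow> (\<exists>i\<in>{0..air_l K D div 2}. P i)" for P
    by blast
  have "(1 \<le> 2 * i + 1 \<and> 2 * i + 1 \<le> air_l K D) \<longleftrightarrow> i \<in> {..<(air_l K D + 1) div 2}" for i :: nat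
    by simp presburger
  then have odd: "(\<exists>i::nat. 1 \<le> 2 * i + 1 \<and> 2 * i + 1 \<le> air_l K D \<and> P i)
      \<longleftrightarrow> (\<exists>i\<in>{..<(air_l K D + 1) div 2}. P i)" for P
    by blast
  show ?thesis
    unfolding air_L_def air_lam_double_diff_one air_lam_double air_lam_double_add_one
      air_lam_double_add_two air_even_block_def air_odd_block_def
    by (simp only: even odd conj_assoc)
qed

context
  fixes K D :: nat
  assumes D_pos: "1 \<le> D" and D_less: "D < K"
begin

lemma air_lamS_le_D: "1 \<le> n \<Longrightarrow> air_lamS K D n \<le> D"
  using air_lamS_antimono[of 1 n K D] by simp

lemma air_lamS_even_le: "air_lamS K D (2*i) \<le> K - D"
  using air_lamS_even_antimono[of 0 i K D] by simp

lemma air_even_block_unique: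
  assumes "air_even_block K D k i j" "air_even_block K D k i' j'"
  shows "i = i'"
proof -
  have False if "air_even_block K D k u v" "air_even_block K D k w z" "u < w" for u v w z
  proof -
    have "air_lamS K D (2*w) \<le> air_lamS K D (2*u+2)"
      using air_lamS_even_antimono[of "Suc u" w K D] that(3) by simp
    moreover have "k < K - D - air_lamS K D (2*u+2)" "K - D - air_lamS K D (2*w) \<le> k"
      using that(1,2) unfolding air_even_block_def by blast+
    ultimately show False by linarith
  qed
  with assms show ?thesis by (meson linorder_neqE_nat)
qed

lemma air_odd_block_unique:
  assumes "air_odd_block K D k i j" "air_odd_block K D k i' j"
  shows "i = i'"
proof -
  have False if "air_odd_block K D k u j" "air_odd_block K D k w j" "u < w" for u w
  proof -
    have "air_lamS K D (2*w+1) \<le> air_lamS K D (2*u+3)"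
      using air_lamS_antimono[of "2*u+3" "2*w+1" K D] that(3) by simp
    moreover have "air_lamS K D (2*u+3) \<le> D" by (simp add: air_lamS_le_D)
    moreover have "j < K - air_lamS K D (2*u+3)" "K - air_lamS K D (2*w+1) \<le> j"
      using that(1,2) unfolding air_odd_block_def by blast+
    ultimately show False using D_less by linarith
  qed
  with assms show ?thesis by (meson linorder_neqE_nat)
qed

lemma air_even_odd_block_disjoint:
  assumes "air_even_block K D k i j" "air_odd_block K D k i' j"
  shows False
proof (cases "i \<le> i'")
  case True
  have "air_lamS K D (2*i'+2) \<le> air_lamS K D (2*i+2)"
    using air_lamS_even_antimono[of "Suc i" "Suc i'" K D] True by simp
  moreover have "k < K - D - air_lamS K D (2*i+2)" "K - D - air_lamS K D (2*i'+2) \<le> k"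
    using assms unfolding air_even_block_def air_odd_block_def by blast+
  ultimately show False by linarith
next
  case False
  have "air_lamS K D (2*i+1) \<le> air_lamS K D (2*i'+3)"
    using air_lamS_antimono[of "2*i'+3" "2*i+1" K D] False by simp
  moreover have "air_lamS K D (2*i'+3) \<le> D" by (simp add: air_lamS_le_D)
  moreover have "K - air_lamS K D (2*i+1) \<le> j" "j < K - air_lamS K D (2*i'+3)"
    using assms unfolding air_even_block_def air_odd_block_def by blast+
  ultimately show False using D_less by linarith
qed

lemma air_blocks_below_identity:
  assumes "j < K - D"
  shows "\<not> air_even_block K D k i j" and "\<not> air_odd_block K D k i j"
proof -
  have "\<not> K - air_lamS K D (2*i+1) \<le> j"
    using assms air_lamS_le_D[of "2*i+1"] D_less by linarith
  then show "\<not> air_even_block K D k i j" and "\<not> air_odd_block K D k i j"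
    unfolding air_even_block_def air_odd_block_def by blast+
qed

lemma air_even_block_iff:
  fixes i j k :: nat
  assumes "i \<le> air_l K D div 2"
  defines "r \<equiv> K - air_lamS K D (2*i+1) + (k - (K - D - air_lamS K D (2*i))) mod air_lamS K D (2*i+1)"
  shows "air_even_block K D k i j \<longleftrightarrow> k \<in> air_C K D i \<and> j = r" and "r < K"
proof -
  define p where "p = air_lamS K D (2*i+1)"
  define m where "m = (k - (K - D - air_lamS K D (2*i))) mod p"
  have "p > 0" unfolding p_def using air_lamS_pos[OF D_pos D_less] assms by simp
  then have "m < p" unfolding m_def by simp
  moreover have "p \<le> D" unfolding p_def by (simp add: air_lamS_le_D)
  moreover have "air_C K D i = {K - D - air_lamS K D (2*i) ..< K - D - air_lamS K D (2*i+2)}"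
    unfolding air_C_def air_lam_double_diff_one air_lam_double_add_one by simp
  ultimately show "air_even_block K D k i j \<longleftrightarrow> k \<in> air_C K D i \<and> j = r" and "r < K"
    unfolding air_even_block_def r_def p_def[symmetric] m_def[symmetric] using D_less by auto
qed

text \<open>The odd submatrix \<open>2i+1\<close> has \<open>\<lambda>_{2i} - \<lambda>_{2i+2} = \<beta>_{2i+1} \<lambda>_{2i+1}\<close> rows, so a
column meeting it does so in \<open>\<beta>_{2i+1}\<close> rows spaced \<open>\<lambda>_{2i+1}\<close> apart.\<close>

lemma air_odd_block_rows:
  assumes k: "k < K - D" and i: "i < (air_l K D + 1) div 2"
  shows "{j. j < K \<and> air_odd_block K D k i j} =
     (if K - D - air_lamS K D (2*i+2) \<le> k
      then (\<lambda>m. k + (D - air_lamS K D (2*i+1)) + m * air_lamS K D (2*i+2))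
             ` {1..air_lamS K D (2*i+1) div air_lamS K D (2*i+2)}
      else {})"
proof -
  define p where "p = air_lamS K D (2*i+2)"
  define q where "q = air_lamS K D (2*i+1)"
  define s where "s = air_lamS K D (2*i+3)"
  define \<beta> where "\<beta> = q div p"
  have "p > 0" unfolding p_def using air_lamS_pos[OF D_pos D_less] i by simp
  then have euclid: "q = \<beta> * p + s"
    unfolding q_def \<beta>_def p_def s_def using air_lamS_euclid[of K D "2*i+1"]
    by (simp add: numeral_eq_Suc)
  have qD: "q \<le> D" unfolding q_def by (simp add: air_lamS_le_D)
  have pa: "p \<le> K - D" unfolding p_def using air_lamS_even_le[of "Suc i"] by simp
  note block = air_odd_block_def[of K D k i, folded p_def q_def s_def]
  show ?thesis
  proof (cases "K - D - p \<le> k")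
    case False
    then show ?thesis unfolding block p_def[symmetric] by auto
  next
    case True
    define r where "r = k - (K - D - p)"
    have rp: "r < p" unfolding r_def using True k pa by linarith
    have "{j. j < K \<and> air_odd_block K D k i j} = (\<lambda>m. k + (D - q) + m * p) ` {1..\<beta>}"
    proof (rule set_eqI, rule iffI)
      fix j assume "j \<in> {j. j < K \<and> air_odd_block K D k i j}"
      then have j1: "K - q \<le> j" and j2: "j < K - s" and j3: "(j - (K - q)) mod p = r"
        unfolding block r_def by auto
      define t where "t = (j - (K - q)) div p"
      have jt: "j - (K - q) = t * p + r" unfolding t_def using j3 div_mult_mod_eq by metis
      then have "t * p < \<beta> * p" using j1 j2 euclid qD D_less by linarith
      then have "t < \<beta>" by simp
      moreover have "j = k + (D - q) + Suc t * p"
        using jt j1 qD D_less True rp pa unfolding r_def by simp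
      ultimately show "j \<in> (\<lambda>m. k + (D - q) + m * p) ` {1..\<beta>}"
        by (intro image_eqI[where x = "Suc t"]) auto
    next
      fix j assume "j \<in> (\<lambda>m. k + (D - q) + m * p) ` {1..\<beta>}"
      then obtain t where t: "Suc t \<le> \<beta>" and "j = k + (D - q) + Suc t * p"
        by (auto simp: Suc_le_eq gr0_conv_Suc)
      then have jt: "j = (K - q) + (r + t * p)"
        using qD D_less True rp pa unfolding r_def by simp
      have "Suc t * p \<le> \<beta> * p" using t by (rule mult_le_mono1)
      then have "j < K - s" using jt rp euclid qD D_less by simp
      moreover have "(j - (K - q)) mod p = r" using jt rp by simp
      moreover have "K - q \<le> j" using jt by simp
      ultimately show "j \<in> {j. j < K \<and> air_odd_block K D k i j}"
        unfolding block r_def using True k by auto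
    qed
    then show ?thesis using True unfolding p_def q_def s_def \<beta>_def by simp
  qed
qed

lemma air_beta_lam_telescope:
  assumes "2*i \<le> air_l K D + 1"
  shows "(\<Sum>s = 1..i. air_beta K D (2 * s - 1) * air_lam K D (2 * int s - 1)) = D - air_lamS K D (2*i+1)"
  using assms
proof (induction i)
  case (Suc i)
  have "air_lamS K D (2*i+2) > 0" using air_lamS_pos[OF D_pos D_less] Suc.prems by simp
  then have "air_lamS K D (2*i+1)
      = air_lamS K D (2*i+1) div air_lamS K D (2*i+2) * air_lamS K D (2*i+2) + air_lamS K D (2*i+3)"
    using air_lamS_euclid[of K D "2*i+1"] by (simp add: numeral_eq_Suc)
  moreover have "air_lamS K D (2*i+1) \<le> D" by (simp add: air_lamS_le_D)
  ultimately show ?case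
    using Suc by (simp del: of_nat_Suc add: air_beta_eq air_lam_double_diff_one numeral_eq_Suc)
qed simp

lemma air_C_UN_tail:
  assumes "i < (air_l K D + 1) div 2"
  shows "(\<Union>t \<in> {Suc i..(air_l K D + 1) div 2}. air_C K D t) = {K - D - air_lamS K D (2*i+2)..<K - D}"
proof -
  define m where "m = (air_l K D + 1) div 2"
  let ?f = "\<lambda>t. K - D - air_lamS K D (2*t)"
  have "air_C K D t = {?f t..<?f (Suc t)}" for t
    unfolding air_C_def air_lam_double_diff_one air_lam_double_add_one by simp
  moreover have "?f t \<le> ?f (Suc t)" for t
    using air_lamS_even_antimono[of t "Suc t" K D] by simp
  moreover have "air_lamS K D (2 * Suc m) = 0"
    by (rule air_lamS_eq_0[OF D_pos]) (simp add: m_def)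
  ultimately show ?thesis
    using UN_adjacent_atLeastLessThan[of ?f "Suc i" m] assms unfolding m_def by simp
qed

subsection \<open>Column sums\<close>

lemma air_c_eq_block_sums:
  fixes x :: "nat \<Rightarrow> 'a::field"
  assumes k: "k < K - D"
  shows "air_c K D x k = x k
    + (\<Sum>i = 0..air_l K D div 2. \<Sum>j<K. (if air_even_block K D k i j then 1 else 0) * x j)
    + (\<Sum>i<(air_l K D + 1) div 2. \<Sum>j<K. (if air_odd_block K D k i j then 1 else 0) * x j)"
proof -
  define IE where "IE = {0..air_l K D div 2}"
  define IO where "IO = {..<(air_l K D + 1) div 2}"
  let ?A = "\<lambda>j. j < K - D \<and> k < K - D \<and> j = k"
  have entry: "(if air_L K D j k then 1 else 0) =
      (if ?A j then 1 else 0) + (\<Sum>i\<in>IE. if air_even_block K D k i j then 1 else 0)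
      + (\<Sum>i\<in>IO. if air_odd_block K D k i j then (1::'a) else 0)" for j
  proof -
    have "(\<Sum>i\<in>IE. if air_even_block K D k i j then 1 else 0)
        = (if \<exists>i\<in>IE. air_even_block K D k i j then (1::'a) else 0)"
      by (rule sum_indicator_unique) (auto simp: IE_def intro: air_even_block_unique)
    moreover have "(\<Sum>i\<in>IO. if air_odd_block K D k i j then 1 else 0)
        = (if \<exists>i\<in>IO. air_odd_block K D k i j then (1::'a) else 0)"
      by (rule sum_indicator_unique) (auto simp: IO_def intro: air_odd_block_unique)
    ultimately show ?thesis
      unfolding air_L_iff_blocks IE_def[symmetric] IO_def[symmetric]
      by (auto dest: air_even_odd_block_disjoint simp: air_blocks_below_identity)
  qed
  have "(\<Sum>j<K. (if ?A j then 1 else 0) * x j) = (\<Sum>j<K. if j = k then x j else 0)"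
    using k by (intro sum.cong) auto
  also have "\<dots> = x k" using k by simp linarith
  finally have identity: "(\<Sum>j<K. (if ?A j then 1 else 0) * x j) = x k" .
  have "air_c K D x k = (\<Sum>j<K. ((if ?A j then 1 else 0)
      + (\<Sum>i\<in>IE. if air_even_block K D k i j then 1 else 0)
      + (\<Sum>i\<in>IO. if air_odd_block K D k i j then 1 else 0)) * x j)"
    unfolding air_c_def entry ..
  also have "\<dots> = (\<Sum>j<K. (if ?A j then 1 else 0) * x j)
      + (\<Sum>j<K. \<Sum>i\<in>IE. (if air_even_block K D k i j then 1 else 0) * x j)
      + (\<Sum>j<K. \<Sum>i\<in>IO. (if air_odd_block K D k i j then 1 else 0) * x j)"
    by (simp add: distrib_right sum.distrib sum_distrib_right)
  also have "\<dots> = x k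
      + (\<Sum>i\<in>IE. \<Sum>j<K. (if air_even_block K D k i j then 1 else 0) * x j)
      + (\<Sum>i\<in>IO. \<Sum>j<K. (if air_odd_block K D k i j then 1 else 0) * x j)"
    unfolding identity by (simp add: sum.swap[of _ IE] sum.swap[of _ IO])
  finally show ?thesis unfolding IE_def IO_def .
qed

lemma air_even_block_column_sum:
  fixes x :: "nat \<Rightarrow> 'a::field"
  assumes "i \<le> air_l K D div 2"
  shows "(\<Sum>j<K. (if air_even_block K D k i j then 1 else 0) * x j) =
    (if k \<in> air_C K D i
     then x ((K - air_lam K D (2 * int i))
             + ((k - (K - D - air_lam K D (2 * int i - 1))) mod air_lam K D (2 * int i)))
     else 0)"
proof -
  let ?r = "K - air_lamS K D (2*i+1) + (k - (K - D - air_lamS K D (2*i))) mod air_lamS K D (2*i+1)"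
  have "{j \<in> {..<K}. air_even_block K D k i j} = (if k \<in> air_C K D i then {?r} else {})"
    using air_even_block_iff[OF assms] by auto
  then show ?thesis
    by (simp add: sum_indicator_mult air_lam_double air_lam_double_diff_one)
qed

lemma air_odd_block_column_sum:
  fixes x :: "nat \<Rightarrow> 'a::field"
  assumes k: "k < K - D" and i: "i < (air_l K D + 1) div 2"
  shows "(\<Sum>j<K. (if air_odd_block K D k i j then 1 else 0) * x j) =
    (if k \<in> (\<Union>t \<in> {Suc i..(air_l K D + 1) div 2}. air_C K D t)
     then (\<Sum>n = 1..air_beta K D (2 * Suc i - 1).
             x (k + (\<Sum>s = 1..i. air_beta K D (2 * s - 1) * air_lam K D (2 * int s - 1))
                  + n * air_lam K D (2 * int (Suc i) - 1)))
     else 0)"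
proof -
  have pos: "air_lamS K D (2*i+2) > 0" using air_lamS_pos[OF D_pos D_less] i by simp
  have "{j \<in> {..<K}. air_odd_block K D k i j} = {j. j < K \<and> air_odd_block K D k i j}" by auto
  then have "(\<Sum>j<K. (if air_odd_block K D k i j then 1 else 0) * x j)
      = sum x {j. j < K \<and> air_odd_block K D k i j}"
    by (simp add: sum_indicator_mult)
  also have "\<dots> = (if K - D - air_lamS K D (2*i+2) \<le> k
       then (\<Sum>n = 1..air_lamS K D (2*i+1) div air_lamS K D (2*i+2).
               x (k + (D - air_lamS K D (2*i+1)) + n * air_lamS K D (2*i+2)))
       else 0)"
    unfolding air_odd_block_rows[OF k i] using pos by (auto simp: sum.reindex inj_on_def)
  finally show ?thesis
    using k i air_C_UN_tail[OF i] air_beta_lam_telescope[of i]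
    by (simp del: of_nat_Suc add: air_beta_eq air_lam_double_diff_one)
qed

end

theorem theorem1:
  fixes K D k :: nat and x :: "nat \<Rightarrow> 'a::{field,finite}"
  assumes "1 \<le> D" and "D \<le> K - 1"
    and "k < K - D"
  shows "air_c K D x k =
     x k
   + (\<Sum>i = 0..air_l K D div 2.
        (if k \<in> air_C K D i
         then x ((K - air_lam K D (2 * int i))
                 + ((k - (K - D - air_lam K D (2 * int i - 1))) mod air_lam K D (2 * int i)))
         else 0))
   + (\<Sum>i = 1..(air_l K D + 1) div 2.
        (if k \<in> (\<Union>t \<in> {i..(air_l K D + 1) div 2}. air_C K D t)
         then (\<Sum>j = 1..air_beta K D (2 * i - 1).
                 x (k + (\<Sum>s = 1..i - 1. air_beta K D (2 * s - 1) * air_lam K D (2 * int s - 1))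
                      + j * air_lam K D (2 * int i - 1)))
         else 0))" (is "_ = _ + ?even + (\<Sum>i = 1..?m. ?odd i)")
proof -
  have D_less: "D < K" using assms(1,2) by linarith
  have "?even = (\<Sum>i = 0..air_l K D div 2. \<Sum>j<K. (if air_even_block K D k i j then 1 else 0) * x j)"
    by (intro sum.cong refl) (simp add: air_even_block_column_sum[OF assms(1) D_less])
  moreover have "(\<Sum>i = 1..?m. ?odd i) = (\<Sum>i<?m. ?odd (Suc i))"
    by (simp add: sum.atLeast1_atMost_eq)
  moreover have "\<dots> = (\<Sum>i<?m. \<Sum>j<K. (if air_odd_block K D k i j then 1 else 0) * x j)"
    by (intro sum.cong refl) (simp add: air_odd_block_column_sum[OF assms(1) D_less assms(3)])
  ultimately show ?thesis
    using air_c_eq_block_sums[OF assms(1) D_less assms(3)] by simp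
qed

end
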